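(* For every integer $q'\ge2$, the network $\mathcal{N}_2$ (with parameter $q'$) has a $3$-dimensional VLNC solution over every finite field.
   Context: Vector linear network coding: each source $v$ generates $x_v\in F^d$; an edge out of a source $v$ carries $Ax_v$ for a $d\times d$ matrix $A$ over $F$; an edge out of an intermediate node carries $\sum A_{e',e}y_{e'}$ over the edges $e'$ entering that node; a terminal computes vectors $\sum B_ey_e$ over its incoming edges; a $d$-dimensional VLNC solution over $F$ is such a code with which every terminal computes each demanded message for all message choices. The Char-$q$-$s$ network (integer $q\ge2$): sources $s,x_1,\dots,x_{q+2}$; intermediate nodes $m_1,\dots,m_{q+3},n_1,\dots,n_{q+3}$; terminals $r_1,\dots,r_{q+3}$; edges: $(x_1,m_i)$ for $1\le i\le q+1$; $(s,m_1)$ and $(s,m_i)$ for $4\le i\le q+3$; $(x_i,m_j)$ for $2\le i,j\le q+2$, $i\ne j$; $(x_i,m_{q+3})$ for $1\le i\le q+2$; $e_i=(m_i,n_i)$ for $1\le i\le q+3$; $(n_i,r_i)$ for $1\le i\le q+2$; $(n_{q+3},r_i)$ and $(n_i,r_{q+3})$ for $1\le i\le q+2$; $(x_i,r_1)$ for $2\le i\le q+1$; $(x_1,r_{q+2})$; $(s,r_2)$; $(s,r_3)$. Demands: $r_1$ demands $x_{q+2}$; $r_i$ demands $x_i$ for $2\le i\le q+2$; $r_{q+3}$ demands $x_1$; no terminal demands $s$. The generalized M-network $\mathcal{M}_3$: sources in three groups $G_1=(\bar a,\bar b,\bar c)$, $G_2=(\bar r,\bar s,\bar w)$, $G_3=(\bar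 x,\bar y,\bar z)$; intermediate nodes $\bar u_1,\bar u_2,\bar u_3,\bar v_1,\dots,\bar v_5$; edges from each source of $G_i$ to $\bar u_i$, edges $(\bar u_i,\bar v_i),(\bar u_i,\bar v_4),(\bar u_i,\bar v_5)$ for $i=1,2,3$, and $(\bar v_i,\bar t_j)$ for $1\le i\le5$, $1\le j\le27$; terminals $\bar t_1,\dots,\bar t_{27}$, where $\bar t_j$ demands the $j$-th triple in the lexicographic order of $G_1\times G_2\times G_3$ (e.g. $\bar t_1$: $\bar a,\bar r,\bar x$; $\bar t_2$: $\bar a,\bar r,\bar y$; $\bar t_4$: $\bar a,\bar s,\bar x$; $\bar t_{25}$: $\bar c,\bar w,\bar x$; $\bar t_{27}$: $\bar c,\bar w,\bar z$). The network $\mathcal{N}_2$ (integer $q'\ge2$) is obtained from the disjoint union of $\mathcal{M}_3$ and a copy of the Char-$q'$-$s$ network (nodes renamed $\bar m_i,\bar n_i$, terminals $\rho_i$, edges $\bar e_i=(\bar m_i,\bar n_i)$, sources $x_i$ renamed $\bar x_i$ for $2\le i\le q'+2$) by identifying $x_1$ with $\bar a$ and $s$ with $\bar x$ (so $\rho_{q'+3}$ demands $\bar a$), and adding the edges: $(\bar w,\bar t_j)$ for $j\in\{7,8,9,16,17,18\}$; $(\bar c,\bar t_j)$ for $19\le j\le24$; $(\bar a,\bar t_{25})$; $(\bar y,\bar t_{26})$; $(\bar n_1,\bar t_{25})$. All other demands are unchanged. *)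

theory Defs
  imports "HOL-Analysis.Analysis" "HOL-Library.Numeral_Type"
begin

text \<open>Messages are vectors
in F^d, represented as 'a^'d with CARD('d) = d; coding coefficients are d x d
matrices 'a^'d^'d.\<close>

definition in_edges :: "('v \<times> 'v) set \<Rightarrow> 'v \<Rightarrow> ('v \<times> 'v) set" where
  "in_edges E v = {e \<in> E. snd e = v}"

text \<open>As: matrix A_e on an edge e out of a source; Ai e' e: coefficient matrix
A_{e',e} for an edge e out of an intermediate node and an incoming edge e' of that node;
B t w e: the decoding matrix B_e used by terminal t to compute the demanded message w.
The edge symbols y are any values consistent with the local coding equations
(for an acyclic network they are uniquely determined by the messages x).\<close>

definition vlnc_solution ::
  "('v \<times> 'v) set \<Rightarrow> 'v set \<Rightarrow> 'v set \<Rightarrow> ('v \<Rightarrow> 'v set) \<Rightarrow>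
   ('v \<times> 'v \<Rightarrow> 'a::field^'d^'d) \<Rightarrow> ('v \<times> 'v \<Rightarrow> 'v \<times> 'v \<Rightarrow> 'a^'d^'d) \<Rightarrow>
   ('v \<Rightarrow> 'v \<Rightarrow> 'v \<times> 'v \<Rightarrow> 'a^'d^'d) \<Rightarrow> bool" where
  "vlnc_solution E S T D As Ai B \<longleftrightarrow>
    (\<forall>(x :: 'v \<Rightarrow> 'a^'d) (y :: 'v \<times> 'v \<Rightarrow> 'a^'d).
      ((\<forall>e\<in>E. fst e \<in> S \<longrightarrow> y e = As e *v x (fst e)) \<and>
       (\<forall>e\<in>E. fst e \<notin> S \<longrightarrow> y e = (\<Sum>e'\<in>in_edges E (fst e). Ai e' e *v y e')))
      \<longrightarrow> (\<forall>t\<in>T. \<forall>w\<in>D t. (\<Sum>e\<in>in_edges E t. B t w e *v y e) = x w))"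

definition has_vlnc_solution ::
  "('v \<times> 'v) set \<Rightarrow> 'v set \<Rightarrow> 'v set \<Rightarrow> ('v \<Rightarrow> 'v set) \<Rightarrow>
   'a::field itself \<Rightarrow> 'd::finite itself \<Rightarrow> bool" where
  "has_vlnc_solution E S T D _ _ \<longleftrightarrow>
    (\<exists>(As :: 'v \<times> 'v \<Rightarrow> 'a^'d^'d) Ai B. vlnc_solution E S T D As Ai B)"

text \<open>Nodes: Na..Nz are the sources a,b,c,r,s,w,x,y,z of M_3 (a = x_1 and
x = s of the Char copy); Nu i, Nv i, Nt j are u_i, v_i, t_j of M_3;
Nxc i are the Char sources x_i (2 \<le> i \<le> q'+2); Nm i, Nn i, Nrho i are the
Char nodes m_i, n_i and terminals rho_i.\<close>

datatype node = Na | Nb | Nc | Nr | Ns | Nw | Nx | Ny | Nz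
  | Nu nat | Nv nat | Nt nat | Nxc nat | Nm nat | Nn nat | Nrho nat

definition grp :: "nat \<Rightarrow> node list" where
  "grp i = (if i = 1 then [Na, Nb, Nc] else if i = 2 then [Nr, Ns, Nw] else [Nx, Ny, Nz])"

text \<open>Char source x_i after identification (x_1 = a).\<close>
definition chx :: "nat \<Rightarrow> node" where
  "chx i = (if i = 1 then Na else Nxc i)"

definition M3_edges :: "(node \<times> node) set" where
  "M3_edges =
     {(g, Nu i) | g i. i \<in> {1..3} \<and> g \<in> set (grp i)}
   \<union> {(Nu i, Nv i) | i. i \<in> {1..3}}
   \<union> {(Nu i, Nv 4) | i. i \<in> {1..3}}
   \<union> {(Nu i, Nv 5) | i. i \<in> {1..3}}
   \<union> {(Nv i, Nt j) | i j. i \<in> {1..5} \<and> j \<in> {1..27}}"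

text \<open>The Char-q-s network with s := Nx and x_1 := Na.\<close>
definition Char_edges :: "nat \<Rightarrow> (node \<times> node) set" where
  "Char_edges q =
     {(chx 1, Nm i) | i. i \<in> {1..q+1}}
   \<union> {(Nx, Nm 1)} \<union> {(Nx, Nm i) | i. i \<in> {4..q+3}}
   \<union> {(chx i, Nm j) | i j. i \<in> {2..q+2} \<and> j \<in> {2..q+2} \<and> i \<noteq> j}
   \<union> {(chx i, Nm (q+3)) | i. i \<in> {1..q+2}}
   \<union> {(Nm i, Nn i) | i. i \<in> {1..q+3}}
   \<union> {(Nn i, Nrho i) | i. i \<in> {1..q+2}}
   \<union> {(Nn (q+3), Nrho i) | i. i \<in> {1..q+2}}
   \<union> {(Nn i, Nrho (q+3)) | i. i \<in> {1..q+2}}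
   \<union> {(chx i, Nrho 1) | i. i \<in> {2..q+1}}
   \<union> {(chx 1, Nrho (q+2))}
   \<union> {(Nx, Nrho 2), (Nx, Nrho 3)}"

definition N2_edges :: "nat \<Rightarrow> (node \<times> node) set" where
  "N2_edges q = M3_edges \<union> Char_edges q
   \<union> {(Nw, Nt j) | j. j \<in> {7,8,9,16,17,18}}
   \<union> {(Nc, Nt j) | j. j \<in> {19..24}}
   \<union> {(Na, Nt 25), (Ny, Nt 26), (Nn 1, Nt 25)}"

definition N2_sources :: "nat \<Rightarrow> node set" where
  "N2_sources q = {Na, Nb, Nc, Nr, Ns, Nw, Nx, Ny, Nz} \<union> {Nxc i | i. i \<in> {2..q+2}}"

definition N2_terminals :: "nat \<Rightarrow> node set" where
  "N2_terminals q = {Nt j | j. j \<in> {1..27}} \<union> {Nrho i | i. i \<in> {1..q+3}}"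

text \<open>t_j demands the j-th triple (lexicographic order) of G_1 x G_2 x G_3.\<close>
definition N2_demands :: "nat \<Rightarrow> node \<Rightarrow> node set" where
  "N2_demands q v = (case v of
      Nt j \<Rightarrow> (if j \<in> {1..27} then
                 {grp 1 ! ((j - 1) div 9), grp 2 ! (((j - 1) div 3) mod 3), grp 3 ! ((j - 1) mod 3)}
               else {})
    | Nrho i \<Rightarrow> (if i = 1 then {chx (q+2)}
                 else if 2 \<le> i \<and> i \<le> q+2 then {chx i}
                 else if i = q+3 then {Na} else {})
    | _ \<Rightarrow> {})"

end

theory Submission
  imports Defs
begin

(* A 3-dimensional code that only forwards, adds, subtracts and permutes coordinates solves the
   network, so the field plays no role.  In the copy of M_3, node u_i sends along (u_i, v_i),
   (u_i, v_4), (u_i, v_5) the first, second and third coordinates of the three messages of group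
   G_i, each message in its own slot.  Node v_i forwards, while v_4 and v_5 take from every group
   the coordinate of the message demanded by t_j; hence t_j obtains the first coordinate of its
   demanded message from G_i from v_i and the other two from v_4 and v_5.  In the Char copy, m_k sends the
   sum of its message inputs (ignoring s) and n_k forwards it; a terminal rho_i with i <= q'+2
   recovers its message as n_{q'+3} - n_i minus its direct source inputs, and rho_{q'+3} reads
   x_1 off n_1.  The extra edges of N_2 get coefficient 0. *)

lemma matrix_vector_mult_uminus_left:
  fixes A :: "'a::comm_ring_1^'n^'m"
  shows "(- A) *v v = - (A *v v)"
  by (simp add: vec_eq_iff matrix_vector_mult_def sum_negf[symmetric])

lemma uminus_mat_1_vector_mult [simp]: "(- mat 1) *v (v :: 'a::comm_ring_1^'n) = - v"
  by (simp add: matrix_vector_mult_uminus_left)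

definition matrix_unit :: "'n \<Rightarrow> 'n \<Rightarrow> 'a::zero_neq_one^'n^'n" where
  "matrix_unit r c = (\<chi> i j. if i = r \<and> j = c then 1 else 0)"

lemma matrix_unit_vector_mult:
  "matrix_unit r c *v (v :: 'a::semiring_1^'n) = (\<chi> i. if i = r then v $ c else 0)"
  by (simp add: vec_eq_iff matrix_vector_mult_def matrix_unit_def mult_delta_left)

lemma sum_matrix_unit_component:
  fixes v :: "'b \<Rightarrow> 'a::semiring_1^'n"
  assumes "finite A" "inj_on p A" "h \<in> A"
  shows "(\<Sum>g\<in>A. matrix_unit (p g) (c g) *v v g) $ p h = v h $ c h"
proof -
  have "(\<Sum>g\<in>A. matrix_unit (p g) (c g) *v v g) $ p h = (\<Sum>g\<in>A. if g = h then v g $ c g else 0)"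
    using assms(2,3) by (auto simp: matrix_unit_vector_mult inj_on_eq_iff
        intro!: sum.cong)
  also have "\<dots> = v h $ c h"
    using assms(1,3) by simp
  finally show ?thesis .
qed

lemma sum_minus_sum_diff_insert:
  fixes f :: "'b \<Rightarrow> 'a::ab_group_add"
  assumes "finite A" "a \<in> A" "D \<subseteq> A" "a \<notin> D"
  shows "sum f A - sum f (A - insert a D) - sum f D = f a"
proof -
  have "sum f A = sum f (A - insert a D) + sum f (insert a D)"
    using assms by (simp add: sum_diff)
  also have "sum f (insert a D) = f a + sum f D"
    using assms by (simp add: finite_subset)
  finally show ?thesis by (simp add: algebra_simps)
qed

lemma sum_in_edges_restrict:
  assumes "finite E" "R \<subseteq> in_edges E v" "\<And>e. e \<in> in_edges E v \<Longrightarrow> e \<notin> R \<Longrightarrow> f e = 0"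
  shows "(\<Sum>e\<in>in_edges E v. f e) = sum f R"
proof -
  have "finite (in_edges E v)"
    using assms(1) by (simp add: in_edges_def)
  then show ?thesis
    using assms(2,3) by (intro sum.mono_neutral_right) auto
qed

definition coding_consistent ::
  "('v \<times> 'v) set \<Rightarrow> 'v set \<Rightarrow> ('v \<times> 'v \<Rightarrow> 'a::field^'d^'d) \<Rightarrow>
   ('v \<times> 'v \<Rightarrow> 'v \<times> 'v \<Rightarrow> 'a^'d^'d) \<Rightarrow> ('v \<Rightarrow> 'a^'d) \<Rightarrow> ('v \<times> 'v \<Rightarrow> 'a^'d) \<Rightarrow> bool" where
  "coding_consistent E S As Ai x y \<longleftrightarrow>
    (\<forall>e\<in>E. fst e \<in> S \<longrightarrow> y e = As e *v x (fst e)) \<and>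
    (\<forall>e\<in>E. fst e \<notin> S \<longrightarrow> y e = (\<Sum>e'\<in>in_edges E (fst e). Ai e' e *v y e'))"

lemma vlnc_solutionI:
  assumes "\<And>x y t w. coding_consistent E S As Ai x y \<Longrightarrow> t \<in> T \<Longrightarrow> w \<in> D t \<Longrightarrow>
             (\<Sum>e\<in>in_edges E t. B t w e *v y e) = x w"
  shows "vlnc_solution E S T D As Ai B"
  using assms unfolding vlnc_solution_def coding_consistent_def by blast

lemma coding_consistent_source:
  "coding_consistent E S As Ai x y \<Longrightarrow> e \<in> E \<Longrightarrow> fst e \<in> S \<Longrightarrow> y e = As e *v x (fst e)"
  unfolding coding_consistent_def by blast

lemma coding_consistent_relay:
  assumes "coding_consistent E S As Ai x y" "finite E" "e \<in> E" "fst e \<notin> S"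
    and "R \<subseteq> in_edges E (fst e)" "\<And>e'. e' \<in> in_edges E (fst e) \<Longrightarrow> e' \<notin> R \<Longrightarrow> Ai e' e = 0"
  shows "y e = (\<Sum>e'\<in>R. Ai e' e *v y e')"
proof -
  have "y e = (\<Sum>e'\<in>in_edges E (fst e). Ai e' e *v y e')"
    using assms(1,3,4) unfolding coding_consistent_def by blast
  also have "\<dots> = (\<Sum>e'\<in>R. Ai e' e *v y e')"
    using assms(2,5,6) by (intro sum_in_edges_restrict) auto
  finally show ?thesis .
qed

fun slot :: "node \<Rightarrow> 3" where
  "slot Na = 1" | "slot Nb = 2" | "slot Nc = 3"
| "slot Nr = 1" | "slot Ns = 2" | "slot Nw = 3"
| "slot Nx = 1" | "slot Ny = 2" | "slot Nz = 3"
| "slot _ = 1"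

fun group_of :: "node \<Rightarrow> nat" where
  "group_of Na = 1" | "group_of Nb = 1" | "group_of Nc = 1"
| "group_of Nr = 2" | "group_of Ns = 2" | "group_of Nw = 2"
| "group_of Nx = 3" | "group_of Ny = 3" | "group_of Nz = 3"
| "group_of _ = 0"

definition group_slot :: "nat \<Rightarrow> 3" where
  "group_slot i = (if i = 1 then 1 else if i = 2 then 2 else 3)"

definition carried_coord :: "nat \<Rightarrow> 3" where
  "carried_coord k = (if k = 4 then 2 else if k = 5 then 3 else 1)"

definition demanded :: "nat \<Rightarrow> nat \<Rightarrow> node" where
  "demanded j i = grp i ! (if i = 1 then (j - 1) div 9 else if i = 2 then (j - 1) div 3 mod 3
                           else (j - 1) mod 3)"

(* Terminal rho_i (i <= q+2) demands x_(rho_target q i) and has direct edges from the sources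
   x_k, k : rho_direct q i; node m_i receives every other message. *)

definition rho_target :: "nat \<Rightarrow> nat \<Rightarrow> nat" where
  "rho_target q i = (if i = 1 then q + 2 else i)"

definition rho_direct :: "nat \<Rightarrow> nat \<Rightarrow> nat set" where
  "rho_direct q i = (if i = 1 then {2..q+1} else if i = q + 2 then {1} else {})"

definition m_inputs :: "nat \<Rightarrow> nat \<Rightarrow> nat set" where
  "m_inputs q k = (if k = q + 3 then {1..q+2} else {1..q+2} - insert (rho_target q k) (rho_direct q k))"

definition N2_relay :: "nat \<Rightarrow> node \<times> node \<Rightarrow> node \<times> node \<Rightarrow> 'a::field^3^3" where
  "N2_relay q e' e = (case fst e of
     Nu i \<Rightarrow> (case snd e of
         Nv k \<Rightarrow> if fst e' \<in> set (grp i) then matrix_unit (slot (fst e')) (carried_coord k) else 0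
       | _ \<Rightarrow> 0)
   | Nv k \<Rightarrow> (case fst e' of
         Nu i \<Rightarrow> if k \<le> 3 then (if i = k then mat 1 else 0)
                 else (case snd e of
                         Nt j \<Rightarrow> if i \<in> {1..3} then matrix_unit (group_slot i) (slot (demanded j i)) else 0
                       | _ \<Rightarrow> 0)
       | _ \<Rightarrow> 0)
   | Nm k \<Rightarrow> if fst e' \<in> chx ` m_inputs q k then mat 1 else 0
   | Nn k \<Rightarrow> if fst e' = Nm k then mat 1 else 0
   | _ \<Rightarrow> 0)"

definition N2_decode :: "nat \<Rightarrow> node \<Rightarrow> node \<Rightarrow> node \<times> node \<Rightarrow> 'a::field^3^3" where
  "N2_decode q t w e = (case t of
     Nt j \<Rightarrow> (case fst e of
         Nv k \<Rightarrow> if k = group_of w then matrix_unit (carried_coord k) (slot w)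
                 else if k \<in> {4, 5} then matrix_unit (carried_coord k) (group_slot (group_of w))
                 else 0
       | _ \<Rightarrow> 0)
   | Nrho i \<Rightarrow> if i = q + 3 then (if fst e = Nn 1 then mat 1 else 0)
               else if fst e = Nn (q + 3) then mat 1
               else if fst e = Nn i \<or> fst e \<in> chx ` rho_direct q i then - mat 1
               else 0
   | _ \<Rightarrow> 0)"

lemma N2_demands_Nt: "j \<in> {1..27} \<Longrightarrow> N2_demands q (Nt j) = demanded j ` {1, 2, 3}"
  by (simp add: N2_demands_def demanded_def)

lemma N2_demands_Nrho:
  "i \<in> {1..q+2} \<Longrightarrow> N2_demands q (Nrho i) = {chx (rho_target q i)}"
  "N2_demands q (Nrho (q + 3)) = {Na}"
  by (auto simp: N2_demands_def rho_target_def)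

lemma demanded_in_grp:
  assumes "j \<in> {1..27}"
  shows "demanded j i \<in> set (grp i)"
proof -
  have "(j - 1) div 9 < 3"
    using assms by (auto simp: div_less_iff_less_mult)
  then show ?thesis
    unfolding demanded_def by (intro nth_mem) (auto simp: grp_def)
qed

lemma group_of_grp: "i \<in> {1..3} \<Longrightarrow> g \<in> set (grp i) \<Longrightarrow> group_of g = i"
  by (auto simp: grp_def split: if_splits)

lemma inj_on_slot_grp: "inj_on slot (set (grp i))"
  by (auto simp: grp_def inj_on_def)

lemma inj_on_group_slot: "inj_on group_slot {1..3}"
  by (auto simp: group_slot_def inj_on_def)

lemma chx_eq_iff [simp]: "chx i = chx k \<longleftrightarrow> i = k"
  by (auto simp: chx_def)

lemma chx_neq_Nn [simp]: "chx i \<noteq> Nn k" "Nn k \<noteq> chx i"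
  by (simp_all add: chx_def)

lemma rho_target_mem: "i \<in> {1..q+2} \<Longrightarrow> rho_target q i \<in> {1..q+2}"
  by (simp add: rho_target_def)

lemma m_inputs_subset: "m_inputs q k \<subseteq> {1..q+2}"
  by (auto simp: m_inputs_def)

lemma finite_rho_direct [simp]: "finite (rho_direct q i)"
  by (simp add: rho_direct_def)

lemma rho_direct_subset: "rho_direct q i \<subseteq> {1..q+2}"
  by (auto simp: rho_direct_def)

lemma rho_target_notin_direct: "rho_target q i \<notin> rho_direct q i"
  by (simp add: rho_target_def rho_direct_def)

lemma finite_N2_edges: "finite (N2_edges q)"
proof -
  have "{(g, Nu i) | g i. i \<in> {1..3} \<and> g \<in> set (grp i)} \<subseteq> {Na, Nb, Nc, Nr, Ns, Nw, Nx, Ny, Nz} \<times> Nu ` {1..3}"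
    by (auto simp: grp_def split: if_splits)
  moreover have "{(chx i, Nm j) | i j. i \<in> {2..q+2} \<and> j \<in> {2..q+2} \<and> i \<noteq> j}
      \<subseteq> (\<lambda>(i, j). (chx i, Nm j)) ` ({2..q+2} \<times> {2..q+2})"
    by auto
  moreover have "{(Nv i, Nt j) | i j. i \<in> {1..5} \<and> j \<in> {1..27}} \<subseteq> (\<lambda>(i, j). (Nv i, Nt j)) ` ({1..5} \<times> {1..27})"
    by auto
  ultimately show ?thesis
    unfolding N2_edges_def M3_edges_def Char_edges_def
    by (simp add: finite_image_set2 finite_subset)
qed

lemma N2_edges_M3:
  "i \<in> {1..3} \<Longrightarrow> g \<in> set (grp i) \<Longrightarrow> (g, Nu i) \<in> N2_edges q"
  "i \<in> {1..3} \<Longrightarrow> k \<in> {i, 4, 5} \<Longrightarrow> (Nu i, Nv k) \<in> N2_edges q"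
  "k \<in> {1..5} \<Longrightarrow> j \<in> {1..27} \<Longrightarrow> (Nv k, Nt j) \<in> N2_edges q"
  by (auto simp: N2_edges_def M3_edges_def)

lemma N2_edges_Char:
  "k \<in> {1..q+3} \<Longrightarrow> (Nm k, Nn k) \<in> N2_edges q"
  "i \<in> {1..q+2} \<Longrightarrow> (Nn i, Nrho i) \<in> N2_edges q"
  "i \<in> {1..q+2} \<Longrightarrow> (Nn (q + 3), Nrho i) \<in> N2_edges q"
  "(Nn 1, Nrho (q + 3)) \<in> N2_edges q"
  "k \<in> rho_direct q i \<Longrightarrow> (chx k, Nrho i) \<in> N2_edges q"
  by (auto simp: N2_edges_def Char_edges_def rho_direct_def split: if_splits)

lemma N2_edges_m_inputs:
  assumes k: "k \<in> {1..q+3}" and i: "i \<in> m_inputs q k"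
  shows "(chx i, Nm k) \<in> N2_edges q"
proof -
  consider (last) "k = q + 3" "i \<in> {1..q+2}"
    | (first_source) "k \<in> {1..q+1}" "i = 1"
    | (other_source) "k \<in> {2..q+2}" "i \<in> {2..q+2}" "i \<noteq> k"
    using k i by (cases "i = 1") (auto simp: m_inputs_def rho_target_def rho_direct_def split: if_splits)
  then have "(chx i, Nm k) \<in> Char_edges q"
    by cases (auto simp: Char_edges_def)
  then show ?thesis
    by (simp add: N2_edges_def)
qed

lemma N2_sources_simps:
  "Nu i \<notin> N2_sources q" "Nv i \<notin> N2_sources q" "Nm i \<notin> N2_sources q" "Nn i \<notin> N2_sources q"
  "i \<in> {1..q+2} \<Longrightarrow> chx i \<in> N2_sources q"
  "i \<in> {1..3} \<Longrightarrow> g \<in> set (grp i) \<Longrightarrow> g \<in> N2_sources q"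
  by (auto simp: N2_sources_def chx_def grp_def split: if_splits)

locale N2_edge_symbols =
  fixes q :: nat and x :: "node \<Rightarrow> 'a::field^3" and y :: "node \<times> node \<Rightarrow> 'a^3"
  assumes consistent: "coding_consistent (N2_edges q) (N2_sources q) (\<lambda>_. mat 1) (N2_relay q) x y"
begin

lemma symbol_source: "e \<in> N2_edges q \<Longrightarrow> fst e \<in> N2_sources q \<Longrightarrow> y e = x (fst e)"
  using coding_consistent_source[OF consistent] by (simp only: matrix_vector_mul_lid)

lemma symbol_relay:
  assumes "e \<in> N2_edges q" "fst e \<notin> N2_sources q" "R \<subseteq> in_edges (N2_edges q) (fst e)"
    and "\<And>e'. e' \<in> in_edges (N2_edges q) (fst e) \<Longrightarrow> e' \<notin> R \<Longrightarrow> N2_relay q e' e = (0 :: 'a^3^3)"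
  shows "y e = (\<Sum>e'\<in>R. N2_relay q e' e *v y e')"
  by (rule coding_consistent_relay[OF consistent finite_N2_edges assms])

lemma symbol_Nu_Nv_component:
  assumes i: "i \<in> {1..3}" and k: "k \<in> {i, 4, 5}" and g: "g \<in> set (grp i)"
  shows "y (Nu i, Nv k) $ slot g = x g $ carried_coord k"
proof -
  have "y (Nu i, Nv k) = (\<Sum>e'\<in>(\<lambda>g. (g, Nu i)) ` set (grp i). N2_relay q e' (Nu i, Nv k) *v y e')"
    using i k by (intro symbol_relay)
      (auto simp: N2_edges_M3 N2_sources_simps in_edges_def N2_relay_def)
  also have "\<dots> = (\<Sum>g\<in>set (grp i). matrix_unit (slot g) (carried_coord k) *v x g)"
    using i by (subst sum.reindex)
      (auto simp: inj_on_def N2_relay_def symbol_source N2_edges_M3 N2_sources_simps intro!: sum.cong)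
  finally show ?thesis
    by (simp only: sum_matrix_unit_component[OF finite_set inj_on_slot_grp g])
qed

lemma symbol_Nv_own_group:
  assumes "k \<in> {1..3}" "j \<in> {1..27}"
  shows "y (Nv k, Nt j) = y (Nu k, Nv k)"
proof -
  have "y (Nv k, Nt j) = (\<Sum>e'\<in>{(Nu k, Nv k)}. N2_relay q e' (Nv k, Nt j) *v y e')"
    using assms by (intro symbol_relay)
      (auto simp: N2_edges_M3 N2_sources_simps in_edges_def N2_relay_def split: node.splits)
  then show ?thesis
    using assms by (simp add: N2_relay_def)
qed

lemma symbol_Nv_mixed_component:
  assumes k: "k \<in> {4, 5}" and i: "i \<in> {1..3}" and j: "j \<in> {1..27}"
  shows "y (Nv k, Nt j) $ group_slot i = x (demanded j i) $ carried_coord k"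
proof -
  have "y (Nv k, Nt j) = (\<Sum>e'\<in>(\<lambda>i. (Nu i, Nv k)) ` {1..3}. N2_relay q e' (Nv k, Nt j) *v y e')"
    using k j by (intro symbol_relay)
      (auto simp: N2_edges_M3 N2_sources_simps in_edges_def N2_relay_def split: node.splits)
  also have "\<dots> = (\<Sum>i\<in>{1..3}. matrix_unit (group_slot i) (slot (demanded j i)) *v y (Nu i, Nv k))"
    using k by (subst sum.reindex) (auto simp: inj_on_def N2_relay_def intro!: sum.cong)
  finally have "y (Nv k, Nt j) $ group_slot i = y (Nu i, Nv k) $ slot (demanded j i)"
    by (simp only: sum_matrix_unit_component[OF finite_atLeastAtMost inj_on_group_slot i])
  also have "\<dots> = x (demanded j i) $ carried_coord k"
    using i j k by (intro symbol_Nu_Nv_component) (auto simp: demanded_in_grp)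
  finally show ?thesis .
qed

lemma symbol_Nn:
  assumes k: "k \<in> {1..q+3}" and e: "(Nn k, t) \<in> N2_edges q"
  shows "y (Nn k, t) = (\<Sum>i\<in>m_inputs q k. x (chx i))"
proof -
  have "y (Nn k, t) = (\<Sum>e'\<in>{(Nm k, Nn k)}. N2_relay q e' (Nn k, t) *v y e')"
    using k e by (intro symbol_relay) (auto simp: N2_edges_Char N2_sources_simps in_edges_def N2_relay_def)
  also have "\<dots> = y (Nm k, Nn k)"
    by (simp add: N2_relay_def)
  also have "\<dots> = (\<Sum>e'\<in>(\<lambda>i. (chx i, Nm k)) ` m_inputs q k. N2_relay q e' (Nm k, Nn k) *v y e')"
    using k by (intro symbol_relay)
      (auto simp: N2_edges_Char N2_edges_m_inputs N2_sources_simps in_edges_def N2_relay_def)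
  also have "\<dots> = (\<Sum>i\<in>m_inputs q k. x (chx i))"
  proof -
    have "y (chx i, Nm k) = x (chx i)" if "i \<in> m_inputs q k" for i
      using that k m_inputs_subset[of q k] symbol_source[of "(chx i, Nm k)"]
      by (auto simp: N2_edges_m_inputs N2_sources_simps subset_iff)
    then show ?thesis
      by (subst sum.reindex) (auto simp: inj_on_def N2_relay_def intro!: sum.cong)
  qed
  finally show ?thesis .
qed

lemma decode_Nt:
  assumes j: "j \<in> {1..27}" and w: "w \<in> N2_demands q (Nt j)"
  shows "(\<Sum>e\<in>in_edges (N2_edges q) (Nt j). N2_decode q (Nt j) w e *v y e) = x w"
proof -
  obtain i where "i \<in> {1, 2, 3}" and w_def: "w = demanded j i"
    using w unfolding N2_demands_Nt[OF j] by blast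
  then have i: "i \<in> {1..3}"
    by auto
  have group: "group_of w = i"
    using i j by (simp add: w_def group_of_grp demanded_in_grp)
  have "(\<Sum>e\<in>in_edges (N2_edges q) (Nt j). N2_decode q (Nt j) w e *v y e)
      = (\<Sum>e\<in>{(Nv i, Nt j), (Nv 4, Nt j), (Nv 5, Nt j)}. N2_decode q (Nt j) w e *v y e)"
    using i j by (intro sum_in_edges_restrict finite_N2_edges)
      (auto simp: in_edges_def N2_edges_M3 N2_decode_def group split: node.splits)
  also have "\<dots> = matrix_unit 1 (slot w) *v y (Nv i, Nt j)
      + matrix_unit 2 (group_slot i) *v y (Nv 4, Nt j) + matrix_unit 3 (group_slot i) *v y (Nv 5, Nt j)"
    using i by (simp add: N2_decode_def group carried_coord_def add.assoc)
  also have "\<dots> = x w"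
  proof -
    have "y (Nv i, Nt j) $ slot w = x w $ 1"
      using i j symbol_Nu_Nv_component[of i i w] symbol_Nv_own_group[of i j]
      by (simp add: w_def demanded_in_grp carried_coord_def)
    moreover have "y (Nv k, Nt j) $ group_slot i = x w $ carried_coord k" if "k \<in> {4, 5}" for k
      using symbol_Nv_mixed_component[OF that i j] by (simp add: w_def)
    ultimately show ?thesis
      by (simp add: vec_eq_iff forall_3 matrix_unit_vector_mult carried_coord_def)
  qed
  finally show ?thesis .
qed

lemma decode_Nrho:
  assumes i: "i \<in> {1..q+2}"
  shows "(\<Sum>e\<in>in_edges (N2_edges q) (Nrho i). N2_decode q (Nrho i) w e *v y e)
    = x (chx (rho_target q i))"
proof -
  let ?D = "rho_direct q i"
  have "(\<Sum>e\<in>in_edges (N2_edges q) (Nrho i). N2_decode q (Nrho i) w e *v y e)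
      = (\<Sum>e\<in>insert (Nn (q + 3), Nrho i) (insert (Nn i, Nrho i) ((\<lambda>k. (chx k, Nrho i)) ` ?D)).
          N2_decode q (Nrho i) w e *v y e)"
    using i by (intro sum_in_edges_restrict finite_N2_edges)
      (auto simp: in_edges_def N2_edges_Char N2_decode_def)
  also have "\<dots> = y (Nn (q + 3), Nrho i) - y (Nn i, Nrho i) - (\<Sum>k\<in>?D. x (chx k))"
  proof -
    have "y (chx k, Nrho i) = x (chx k)" if "k \<in> ?D" for k
      using that rho_direct_subset[of q i] symbol_source[of "(chx k, Nrho i)"]
      by (auto simp: N2_edges_Char N2_sources_simps subset_iff)
    then have "(\<Sum>e\<in>(\<lambda>k. (chx k, Nrho i)) ` ?D. N2_decode q (Nrho i) w e *v y e) = (\<Sum>k\<in>?D. - x (chx k))"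
      using i by (subst sum.reindex) (auto simp: inj_on_def N2_decode_def intro!: sum.cong)
    moreover have "(Nn (q + 3), Nrho i) \<notin> insert (Nn i, Nrho i) ((\<lambda>k. (chx k, Nrho i)) ` ?D)"
      "(Nn i, Nrho i) \<notin> (\<lambda>k. (chx k, Nrho i)) ` ?D"
      using i by auto
    ultimately show ?thesis
      using i by (simp add: N2_decode_def sum_negf)
  qed
  also have "\<dots> = (\<Sum>k\<in>{1..q+2}. x (chx k)) - (\<Sum>k\<in>{1..q+2} - insert (rho_target q i) ?D. x (chx k))
      - (\<Sum>k\<in>?D. x (chx k))"
    using i by (simp add: symbol_Nn N2_edges_Char m_inputs_def)
  also have "\<dots> = x (chx (rho_target q i))"
    using i by (intro sum_minus_sum_diff_insert rho_target_mem rho_direct_subset rho_target_notin_direct)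
      simp_all
  finally show ?thesis .
qed

lemma decode_Nrho_last:
  "(\<Sum>e\<in>in_edges (N2_edges q) (Nrho (q + 3)). N2_decode q (Nrho (q + 3)) w e *v y e) = x Na"
proof -
  have "(\<Sum>e\<in>in_edges (N2_edges q) (Nrho (q + 3)). N2_decode q (Nrho (q + 3)) w e *v y e)
      = (\<Sum>e\<in>{(Nn 1, Nrho (q + 3))}. N2_decode q (Nrho (q + 3)) w e *v y e)"
    using N2_edges_Char(4)
    by (intro sum_in_edges_restrict finite_N2_edges) (auto simp: in_edges_def N2_decode_def)
  also have "\<dots> = (\<Sum>k\<in>m_inputs q 1. x (chx k))"
    using N2_edges_Char(4) by (simp add: N2_decode_def symbol_Nn)
  also have "m_inputs q 1 = {1}"
    by (auto simp: m_inputs_def rho_target_def rho_direct_def)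
  finally show ?thesis
    by (simp add: chx_def)
qed

lemma decode_correct:
  assumes "t \<in> N2_terminals q" "w \<in> N2_demands q t"
  shows "(\<Sum>e\<in>in_edges (N2_edges q) t. N2_decode q t w e *v y e) = x w"
proof -
  consider (Nt) j where "t = Nt j" "j \<in> {1..27}" | (Nrho) i where "t = Nrho i" "i \<in> {1..q+2}"
    | (Nrho_last) "t = Nrho (q + 3)"
    using assms(1) by (force simp: N2_terminals_def)
  then show ?thesis
    by cases (use assms(2) in \<open>auto simp: decode_Nt decode_Nrho decode_Nrho_last N2_demands_Nrho\<close>)
qed

end

lemma N2_vlnc_solution:
  "vlnc_solution (N2_edges q) (N2_sources q) (N2_terminals q) (N2_demands q)
     (\<lambda>_. mat 1 :: 'a::field^3^3) (N2_relay q) (N2_decode q)"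
proof (rule vlnc_solutionI)
  fix x :: "node \<Rightarrow> 'a^3" and y t w
  assume "coding_consistent (N2_edges q) (N2_sources q) (\<lambda>_. mat 1) (N2_relay q) x y"
  then interpret N2_edge_symbols q x y
    by unfold_locales
  show "t \<in> N2_terminals q \<Longrightarrow> w \<in> N2_demands q t \<Longrightarrow>
      (\<Sum>e\<in>in_edges (N2_edges q) t. N2_decode q t w e *v y e) = x w"
    by (rule decode_correct)
qed

(* The construction works for every q. *)

theorem lemma10:
  fixes q :: nat
  assumes "q \<ge> 2"
  shows "has_vlnc_solution (N2_edges q) (N2_sources q) (N2_terminals q) (N2_demands q)
           TYPE('a::{field,finite}) TYPE(3)"
  using N2_vlnc_solution unfolding has_vlnc_solution_def by blast

end
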